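(* Let $\Sigma\subset\mathbb{R}^{n+1}$ be a pure, hereditary, $(n+1)$-dimensional fan with smoothness parameters $\alpha$. Then $H_{n+1}(\mathcal{R}/\mathcal{J}[\Sigma,\Sigma^{-1}])=C^\alpha(\Sigma)$.
   Context: $S=\mathbb{R}[x_0,\ldots,x_n]$. A cone is the positive hull of finitely many vectors, of dimension that of its linear span $\mathrm{aff}(\gamma)$; a fan is a finite set of cones closed under faces, any two meeting in a common face; $\Sigma_i$ = $i$-dim cones, facets = maximal cones; pure: all facets of dim $n+1$; hereditary: for every face $\psi$ the graph on facets containing $\psi$ with edges for pairs meeting in an $n$-face is connected; $\partial\Sigma$ = subfan of faces contained in an $n$-face lying in exactly one facet; others interior. $l_\tau$ generates the ideal of $\mathrm{aff}(\tau)$. Smoothness parameters: integers $\alpha(\tau)\ge-1$ ($\tau\in\Sigma_n$), $\ge0$ on interior $\tau$; $\Sigma^{-1}$ = subfan of $\partial\Sigma$ of cones contained in some $\tau$ with $\alpha(\tau)=-1$; $J(\tau)=\langle l_\tau^{\alpha(\tau)+1}\rangle$ for $\tau\in\Sigma_n\setminus\Sigma^{-1}_n$, $J(\gamma)=\sum_{\tau\in\Sigma_n\setminus\Sigma^{-1}_n,\gamma\subseteq\tau}J(\tau)$ for non-facets, $J(\sigma)=0$ for facets. With $u_\rho$ unit ray generators, $P(\gamma)=\mathrm{conv}(\{0\}\cup\{u_\rho:\rho\subseteq\gamma\})$, $\mathrm{lk}(\gamma)=\mathrm{conv}\{u_\rho\}$; $\mathcal{R}/\mathcal{J}[\Sigma,\Sigma^{-1}]_i=\bigoplus_{\gamma\in\Sigma_i\setminus\Sigma^{-1}_i}S/J(\gamma)$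 ($0\le i\le n+1$) with differential induced by the cellular boundary of the relative cellular chain complex of $(P(\Sigma),\mathrm{lk}(\Sigma)\cup P(\Sigma^{-1}))$ with $S$ coefficients. The spline module $C^\alpha(\Sigma)$ is the set of tuples $(F_\sigma)_{\sigma\in\Sigma_{n+1}}\in\bigoplus_{\sigma\in\Sigma_{n+1}}S$ such that $l_\tau^{\alpha(\tau)+1}\mid F_{\sigma_1}-F_{\sigma_2}$ whenever $\sigma_1\cap\sigma_2=\tau\in\Sigma_n$, and $l_\tau^{\alpha(\tau)+1}\mid F_\sigma$ whenever $\tau\in\Sigma_n\cap\partial\Sigma$ and $\tau\subseteq\sigma$. *)

theory Defs
  imports "HOL-Analysis.Analysis" "HOL-Library.Poly_Mapping"
begin

text \<open>Ambient space R^(n+1) is real^'d with CARD('d) = n+1.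
  The polynomial ring S = R[x_d : d in 'd] is ('d =>0 nat) =>0 real.\<close>

type_synonym 'd spoly = "('d \<Rightarrow>\<^sub>0 nat) \<Rightarrow>\<^sub>0 real"

definition pos_hull :: "('a::real_vector) set \<Rightarrow> 'a set" where
  "pos_hull V = {(\<Sum>v\<in>V. c v *\<^sub>R v) | c. \<forall>v\<in>V. 0 \<le> c v}"

definition is_cone :: "('a::real_vector) set \<Rightarrow> bool" where
  "is_cone \<gamma> \<longleftrightarrow> (\<exists>V. finite V \<and> \<gamma> = pos_hull V)"

text \<open>Dimension of a cone = dimension of its linear span (dim of a set in HOL-Analysis
  is the dimension of its span).\<close>

definition is_fan :: "('a::euclidean_space) set set \<Rightarrow> bool" where
  "is_fan \<Sigma> \<longleftrightarrow> finite \<Sigma> \<and> (\<forall>\<gamma>\<in>\<Sigma>. is_cone \<gamma>)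
     \<and> (\<forall>\<gamma>\<in>\<Sigma>. \<forall>\<delta>. \<delta> face_of \<gamma> \<and> \<delta> \<noteq> {} \<longrightarrow> \<delta> \<in> \<Sigma>)
     \<and> (\<forall>\<gamma>\<in>\<Sigma>. \<forall>\<delta>\<in>\<Sigma>. (\<gamma> \<inter> \<delta>) face_of \<gamma> \<and> (\<gamma> \<inter> \<delta>) face_of \<delta>)"

definition cones_dim :: "('a::euclidean_space) set set \<Rightarrow> nat \<Rightarrow> 'a set set" where
  "cones_dim \<Sigma> i = {\<gamma>\<in>\<Sigma>. dim \<gamma> = i}"

definition facets :: "'a set set \<Rightarrow> 'a set set" where
  "facets \<Sigma> = {\<sigma>\<in>\<Sigma>. \<forall>\<gamma>\<in>\<Sigma>. \<sigma> \<subseteq> \<gamma> \<longrightarrow> \<gamma> = \<sigma>}"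

definition pure_fan :: "(real^'d) set set \<Rightarrow> bool" where
  "pure_fan \<Sigma> \<longleftrightarrow> (\<forall>\<sigma>\<in>facets \<Sigma>. dim \<sigma> = CARD('d))"

definition codim1 :: "(real^'d) set set \<Rightarrow> (real^'d) set set" where
  "codim1 \<Sigma> = cones_dim \<Sigma> (CARD('d) - 1)"

definition hereditary :: "(real^'d) set set \<Rightarrow> bool" where
  "hereditary \<Sigma> \<longleftrightarrow> (\<forall>\<psi>\<in>\<Sigma>.
      let F = {\<sigma>\<in>facets \<Sigma>. \<psi> \<subseteq> \<sigma>};
          adj = (\<lambda>\<sigma>1 \<sigma>2. \<sigma>1 \<in> F \<and> \<sigma>2 \<in> F \<and> \<sigma>1 \<inter> \<sigma>2 \<in> codim1 \<Sigma>)
      in \<forall>\<sigma>1\<in>F. \<forall>\<sigma>2\<in>F. adj\<^sup>*\<^sup>* \<sigma>1 \<sigma>2)"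

definition bdry :: "(real^'d) set set \<Rightarrow> (real^'d) set set" where
  "bdry \<Sigma> = {\<gamma>\<in>\<Sigma>. \<exists>\<tau>\<in>codim1 \<Sigma>. card {\<sigma>\<in>facets \<Sigma>. \<tau> \<subseteq> \<sigma>} = 1 \<and> \<gamma> \<subseteq> \<tau>}"

definition smoothness_params :: "(real^'d) set set \<Rightarrow> ((real^'d) set \<Rightarrow> int) \<Rightarrow> bool" where
  "smoothness_params \<Sigma> \<alpha> \<longleftrightarrow>
     (\<forall>\<tau>\<in>codim1 \<Sigma>. \<alpha> \<tau> \<ge> -1) \<and> (\<forall>\<tau>\<in>codim1 \<Sigma> - bdry \<Sigma>. \<alpha> \<tau> \<ge> 0)"

definition sigma_neg :: "(real^'d) set set \<Rightarrow> ((real^'d) set \<Rightarrow> int) \<Rightarrow> (real^'d) set set" where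
  "sigma_neg \<Sigma> \<alpha> = {\<gamma>\<in>bdry \<Sigma>. \<exists>\<tau>\<in>codim1 \<Sigma>. \<alpha> \<tau> = -1 \<and> \<gamma> \<subseteq> \<tau>}"

text \<open>Linear form l_tau = sum_d a_d x_d with a a nonzero normal of the hyperplane aff(tau);
  it generates the ideal of aff(tau) (unique up to a nonzero scalar).\<close>
definition normal_of :: "(real^'d) set \<Rightarrow> real^'d" where
  "normal_of \<tau> = (SOME a. a \<noteq> 0 \<and> (\<forall>v\<in>\<tau>. a \<bullet> v = 0))"

definition lin_form :: "real^'d \<Rightarrow> 'd spoly" where
  "lin_form a = (\<Sum>d\<in>UNIV. Poly_Mapping.single (Poly_Mapping.single d 1) (a $ d))"

definition lform :: "(real^'d) set \<Rightarrow> 'd spoly" where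
  "lform \<tau> = lin_form (normal_of \<tau>)"

definition gen_pow :: "((real^'d) set \<Rightarrow> int) \<Rightarrow> (real^'d) set \<Rightarrow> 'd spoly" where
  "gen_pow \<alpha> \<tau> = lform \<tau> ^ nat (\<alpha> \<tau> + 1)"

definition Jideal :: "(real^'d) set set \<Rightarrow> ((real^'d) set \<Rightarrow> int) \<Rightarrow> (real^'d) set \<Rightarrow> 'd spoly set" where
  "Jideal \<Sigma> \<alpha> \<gamma> =
    (if \<gamma> \<in> facets \<Sigma> then {0}
     else {(\<Sum>\<tau>\<in>{\<tau>\<in>codim1 \<Sigma> - sigma_neg \<Sigma> \<alpha>. \<gamma> \<subseteq> \<tau>}. q \<tau> * gen_pow \<alpha> \<tau>) | q. True})"

text \<open>Incidence number [P(sigma):P(delta)] of the cellular boundary, for sigma of dimension n+1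
  oriented by the standard orientation of R^(n+1), and delta of dimension n oriented so that
  (normal_of delta, oriented basis of delta) is positively oriented: it is +1 if normal_of delta
  points out of sigma, -1 if it points into sigma, 0 if delta is not a face of sigma.\<close>
definition incidence :: "(real^'d) set \<Rightarrow> (real^'d) set \<Rightarrow> int" where
  "incidence \<sigma> \<delta> =
     (if \<delta> \<subseteq> \<sigma> then (if (\<forall>x\<in>\<sigma>. normal_of \<delta> \<bullet> x \<le> 0) then 1 else -1) else 0)"

text \<open>Top chain module (degree n+1) of R/J[Sigma,Sigma^-1]: direct sum of S/J(sigma) = S over
  sigma in Sigma_(n+1) minus Sigma^-1, represented as functions vanishing off that index set.\<close>
definition top_chains :: "(real^'d) set set \<Rightarrow> ((real^'d) set \<Rightarrow> int) \<Rightarrow> ((real^'d) set \<Rightarrow> 'd spoly) set" where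
  "top_chains \<Sigma> \<alpha> = {F. \<forall>\<gamma>. \<gamma> \<notin> cones_dim \<Sigma> CARD('d) - sigma_neg \<Sigma> \<alpha> \<longrightarrow> F \<gamma> = 0}"

text \<open>Top differential, with values in the direct sum of S/J(delta) (delta in Sigma_n minus Sigma^-1),
  given by representatives.\<close>
definition d_top :: "(real^'d) set set \<Rightarrow> ((real^'d) set \<Rightarrow> int) \<Rightarrow> ((real^'d) set \<Rightarrow> 'd spoly) \<Rightarrow> (real^'d) set \<Rightarrow> 'd spoly" where
  "d_top \<Sigma> \<alpha> F \<delta> = (\<Sum>\<sigma>\<in>cones_dim \<Sigma> CARD('d) - sigma_neg \<Sigma> \<alpha>. of_int (incidence \<sigma> \<delta>) * F \<sigma>)"

text \<open>H_(n+1): since the complex has no term in degree n+2, it is the kernel of the top differential,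
  i.e. the chains whose image has every component zero in S/J(delta).\<close>
definition H_top :: "(real^'d) set set \<Rightarrow> ((real^'d) set \<Rightarrow> int) \<Rightarrow> ((real^'d) set \<Rightarrow> 'd spoly) set" where
  "H_top \<Sigma> \<alpha> = {F\<in>top_chains \<Sigma> \<alpha>.
       \<forall>\<delta>\<in>codim1 \<Sigma> - sigma_neg \<Sigma> \<alpha>. d_top \<Sigma> \<alpha> F \<delta> \<in> Jideal \<Sigma> \<alpha> \<delta>}"

definition spline_module :: "(real^'d) set set \<Rightarrow> ((real^'d) set \<Rightarrow> int) \<Rightarrow> ((real^'d) set \<Rightarrow> 'd spoly) set" where
  "spline_module \<Sigma> \<alpha> = {F.
      (\<forall>\<gamma>. \<gamma> \<notin> cones_dim \<Sigma> CARD('d) \<longrightarrow> F \<gamma> = 0)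
    \<and> (\<forall>\<sigma>1\<in>cones_dim \<Sigma> CARD('d). \<forall>\<sigma>2\<in>cones_dim \<Sigma> CARD('d). \<forall>\<tau>\<in>codim1 \<Sigma>.
          \<sigma>1 \<inter> \<sigma>2 = \<tau> \<longrightarrow> gen_pow \<alpha> \<tau> dvd (F \<sigma>1 - F \<sigma>2))
    \<and> (\<forall>\<sigma>\<in>cones_dim \<Sigma> CARD('d). \<forall>\<tau>\<in>codim1 \<Sigma> \<inter> bdry \<Sigma>.
          \<tau> \<subseteq> \<sigma> \<longrightarrow> gen_pow \<alpha> \<tau> dvd F \<sigma>)}"

end

theory Submission
  imports Defs
begin

text \<open>The top homology is the kernel of the top differential, and membership in it is decided
  separately at each \<open>n\<close>-cone \<open>\<tau>\<close>, where only the full-dimensional cones containing \<open>\<tau>\<close>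
  contribute. Near a relative interior point of \<open>\<tau>\<close> each of them coincides with one of the two
  closed half-spaces bounded by the hyperplane of \<open>\<tau>\<close>, and its incidence number records which;
  so there are at most two of them, with opposite incidences when there are two. The component
  at \<open>\<tau>\<close> is therefore \<open>\<plusminus>F\<^sub>\<sigma>\<close> when \<open>\<tau>\<close> lies in a single facet \<open>\<sigma>\<close>, i.e. is a boundary cone,
  and \<open>\<plusminus>(F\<^sub>\<sigma>\<^sub>1 - F\<^sub>\<sigma>\<^sub>2)\<close> when \<open>\<sigma>\<^sub>1 \<inter> \<sigma>\<^sub>2 = \<tau>\<close>; its lying in \<open>J(\<tau>) = \<langle>l\<^sub>\<tau>\<^bsup>\<alpha>(\<tau>)+1\<^esup>\<rangle>\<close> is exactly
  the spline condition at \<open>\<tau>\<close> (which is vacuous on \<open>\<Sigma>\<^sup>-\<^sup>1\<close>, where the exponent is 0).\<close>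

lemma pos_hull_eq_convex_cone_hull:
  fixes V :: "'a::real_vector set"
  assumes "finite V"
  shows "pos_hull V = convex_cone hull V"
proof
  show "pos_hull V \<subseteq> convex_cone hull V"
  proof
    fix x assume "x \<in> pos_hull V"
    then obtain c where x: "x = (\<Sum>v\<in>V. c v *\<^sub>R v)" and c: "\<forall>v\<in>V. 0 \<le> c v"
      unfolding pos_hull_def by blast
    have "(\<Sum>v\<in>W. c v *\<^sub>R v) \<in> convex_cone hull V" if "W \<subseteq> V" for W
      using finite_subset[OF that assms] that
    proof (induction W rule: finite_induct)
      case empty
      then show ?case by (simp add: convex_cone_hull_contains_0)
    next
      case (insert w W)
      then show ?case
        by (simp add: convex_cone_hull_add convex_cone_hull_mul hull_inc c subsetD)
    qed
    then show "x \<in> convex_cone hull V" using x by blast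
  qed
next
  have "V \<subseteq> pos_hull V"
  proof
    fix w assume "w \<in> V"
    have "(\<Sum>v\<in>V. (if v = w then 1 else 0) *\<^sub>R v) = (\<Sum>v\<in>V. if v = w then v else 0)"
      by (rule sum.cong) auto
    also have "\<dots> = w" using assms \<open>w \<in> V\<close> by (simp add: sum.delta)
    finally have "(\<Sum>v\<in>V. (if v = w then 1 else 0) *\<^sub>R v) = w" .
    then show "w \<in> pos_hull V" unfolding pos_hull_def
      by (intro CollectI exI[where x="\<lambda>v. if v = w then 1 else 0"]) auto
  qed
  moreover have "convex_cone (pos_hull V)"
    unfolding convex_cone_def
  proof (intro conjI)
    show "pos_hull V \<noteq> {}"
      unfolding pos_hull_def by (auto intro!: exI[where x="\<lambda>v. 0"])
    show "conic (pos_hull V)" unfolding conic_def pos_hull_def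
    proof clarify
      fix t :: real and d :: "'a \<Rightarrow> real" assume "0 \<le> t" "\<forall>v\<in>V. 0 \<le> d v"
      then show "\<exists>e. t *\<^sub>R (\<Sum>v\<in>V. d v *\<^sub>R v) = (\<Sum>v\<in>V. e v *\<^sub>R v) \<and> (\<forall>v\<in>V. 0 \<le> e v)"
        by (intro exI[where x="\<lambda>v. t * d v"]) (simp add: scaleR_sum_right)
    qed
    show "convex (pos_hull V)" unfolding convex_def pos_hull_def
    proof clarify
      fix u w :: real and c d :: "'a \<Rightarrow> real"
      assume "0 \<le> u" "0 \<le> w" "\<forall>v\<in>V. 0 \<le> c v" "\<forall>v\<in>V. 0 \<le> d v"
      then show "\<exists>e. u *\<^sub>R (\<Sum>v\<in>V. c v *\<^sub>R v) + w *\<^sub>R (\<Sum>v\<in>V. d v *\<^sub>R v)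
                    = (\<Sum>v\<in>V. e v *\<^sub>R v) \<and> (\<forall>v\<in>V. 0 \<le> e v)"
        by (intro exI[where x="\<lambda>v. u * c v + w * d v"])
           (simp add: scaleR_sum_right sum.distrib scaleR_add_left)
    qed
  qed
  ultimately show "convex_cone hull V \<subseteq> pos_hull V"
    by (rule hull_minimal)
qed

lemma is_cone_polyhedron: "is_cone (\<gamma>::'a::euclidean_space set) \<Longrightarrow> polyhedron \<gamma>"
  unfolding is_cone_def using pos_hull_eq_convex_cone_hull polyhedron_convex_cone_hull by metis

lemma is_cone_contains_0: "is_cone (\<gamma>::'a::real_vector set) \<Longrightarrow> 0 \<in> \<gamma>"
  unfolding is_cone_def using pos_hull_eq_convex_cone_hull convex_cone_hull_contains_0 by metis

lemma fan_polyhedron: "is_fan \<Sigma> \<Longrightarrow> \<gamma> \<in> \<Sigma> \<Longrightarrow> polyhedron \<gamma>"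
  unfolding is_fan_def using is_cone_polyhedron by blast

lemma fan_contains_0: "is_fan \<Sigma> \<Longrightarrow> \<gamma> \<in> \<Sigma> \<Longrightarrow> 0 \<in> \<gamma>"
  unfolding is_fan_def using is_cone_contains_0 by blast

lemma fan_Int_face_of:
  assumes "is_fan \<Sigma>" "\<gamma> \<in> \<Sigma>" "\<delta> \<in> \<Sigma>"
  shows "(\<gamma> \<inter> \<delta>) face_of \<gamma>"
proof -
  have "\<forall>\<gamma>\<in>\<Sigma>. \<forall>\<delta>\<in>\<Sigma>. (\<gamma> \<inter> \<delta>) face_of \<gamma> \<and> (\<gamma> \<inter> \<delta>) face_of \<delta>"
    using assms(1) unfolding is_fan_def by (elim conjE)
  then show ?thesis using assms(2,3) by blast
qed

lemma fan_face_of_mem: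
  assumes "is_fan \<Sigma>" "\<gamma> \<in> \<Sigma>" "\<delta> face_of \<gamma>" "\<delta> \<noteq> {}"
  shows "\<delta> \<in> \<Sigma>"
proof -
  have "\<forall>\<gamma>\<in>\<Sigma>. \<forall>\<delta>. \<delta> face_of \<gamma> \<and> \<delta> \<noteq> {} \<longrightarrow> \<delta> \<in> \<Sigma>"
    using assms(1) unfolding is_fan_def by (elim conjE)
  then show ?thesis using assms(2-4) by blast
qed

lemma fan_subset_imp_face_of:
  "is_fan \<Sigma> \<Longrightarrow> \<gamma> \<in> \<Sigma> \<Longrightarrow> \<delta> \<in> \<Sigma> \<Longrightarrow> \<delta> \<subseteq> \<gamma> \<Longrightarrow> \<delta> face_of \<gamma>"
  using fan_Int_face_of[of \<Sigma> \<gamma> \<delta>] by (simp add: Int_absorb1)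

lemma fan_subset_eq_if_dim_le:
  fixes \<Sigma> :: "'a::euclidean_space set set"
  assumes fan: "is_fan \<Sigma>" and "\<gamma> \<in> \<Sigma>" "\<delta> \<in> \<Sigma>" "\<delta> \<subseteq> \<gamma>" "dim \<gamma> \<le> dim \<delta>"
  shows "\<delta> = \<gamma>"
proof (rule ccontr)
  assume "\<delta> \<noteq> \<gamma>"
  moreover have "\<delta> face_of \<gamma>" using fan_subset_imp_face_of assms by blast
  moreover have "convex \<gamma>" using fan_polyhedron polyhedron_imp_convex assms by blast
  ultimately have "aff_dim \<delta> < aff_dim \<gamma>" using face_of_aff_dim_lt by blast
  moreover have "aff_dim X = int (dim X)" if "X \<in> \<Sigma>" for X
    using aff_dim_eq_dim[of 0 X] fan_contains_0[OF fan that] by (simp add: hull_inc)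
  ultimately show False using assms by simp
qed

lemma facets_eq_full_dim_cones:
  fixes \<Sigma> :: "(real^'d) set set"
  assumes "is_fan \<Sigma>" "pure_fan \<Sigma>"
  shows "facets \<Sigma> = cones_dim \<Sigma> CARD('d)"
proof
  show "facets \<Sigma> \<subseteq> cones_dim \<Sigma> CARD('d)"
    using assms(2) unfolding pure_fan_def facets_def cones_dim_def by auto
  show "cones_dim \<Sigma> CARD('d) \<subseteq> facets \<Sigma>"
  proof
    fix \<sigma> assume "\<sigma> \<in> cones_dim \<Sigma> CARD('d)"
    then have \<sigma>: "\<sigma> \<in> \<Sigma>" "dim \<sigma> = CARD('d)" unfolding cones_dim_def by auto
    have "\<gamma> = \<sigma>" if "\<gamma> \<in> \<Sigma>" "\<sigma> \<subseteq> \<gamma>" for \<gamma>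
      using fan_subset_eq_if_dim_le[OF assms(1) that(1) \<sigma>(1) that(2)] dim_subset_UNIV_cart[of \<gamma>] \<sigma>(2)
      by simp
    with \<sigma>(1) show "\<sigma> \<in> facets \<Sigma>" unfolding facets_def by blast
  qed
qed

lemma codim1_D:
  fixes \<Sigma> :: "(real^'d) set set"
  assumes "\<tau> \<in> codim1 \<Sigma>"
  shows "\<tau> \<in> \<Sigma>" "dim \<tau> = CARD('d) - 1" "dim \<tau> < CARD('d)"
  using assms unfolding codim1_def cones_dim_def by auto

lemma codim1_subset_eq:
  fixes \<Sigma> :: "(real^'d) set set"
  assumes "is_fan \<Sigma>" "\<delta> \<in> codim1 \<Sigma>" "\<tau> \<in> codim1 \<Sigma>" "\<delta> \<subseteq> \<tau>"
  shows "\<delta> = \<tau>"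
  using fan_subset_eq_if_dim_le[OF assms(1) codim1_D(1)[OF assms(3)] codim1_D(1)[OF assms(2)] assms(4)]
    codim1_D(2)[OF assms(2)] codim1_D(2)[OF assms(3)] by simp

lemma normal_of:
  fixes \<tau> :: "(real^'d) set"
  assumes "dim \<tau> < CARD('d)"
  shows "normal_of \<tau> \<noteq> 0" "\<forall>v\<in>\<tau>. normal_of \<tau> \<bullet> v = 0"
proof -
  obtain x :: "real^'d" where "x \<noteq> 0" "\<And>y. y \<in> span \<tau> \<Longrightarrow> orthogonal x y"
    using orthogonal_to_subspace_exists[of \<tau>] assms by auto
  then have "\<exists>a. a \<noteq> 0 \<and> (\<forall>v\<in>\<tau>. a \<bullet> v = 0)"
    by (metis orthogonal_def span_base)
  then have "normal_of \<tau> \<noteq> 0 \<and> (\<forall>v\<in>\<tau>. normal_of \<tau> \<bullet> v = 0)"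
    unfolding normal_of_def by (rule someI_ex)
  then show "normal_of \<tau> \<noteq> 0" "\<forall>v\<in>\<tau>. normal_of \<tau> \<bullet> v = 0" by auto
qed

lemma span_eq_hyperplane:
  fixes \<tau> :: "(real^'d) set"
  assumes "dim \<tau> = CARD('d) - 1" "a \<noteq> 0" "\<forall>v\<in>\<tau>. a \<bullet> v = 0"
  shows "span \<tau> = {x. a \<bullet> x = 0}"
proof -
  have sub: "span \<tau> \<subseteq> {x. a \<bullet> x = 0}"
    by (rule span_minimal) (use assms(3) subspace_hyperplane in auto)
  have "dim {x. a \<bullet> x = 0} = CARD('d) - 1" using dim_hyperplane[OF assms(2)] by simp
  then show ?thesis
    using subspace_dim_equal[OF subspace_span subspace_hyperplane sub] assms(1) by simp
qed

lemma normals_of_hyperplane_parallel: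
  fixes \<tau> :: "(real^'d) set"
  assumes "dim \<tau> = CARD('d) - 1" "a \<noteq> 0" "\<forall>v\<in>\<tau>. a \<bullet> v = 0" "\<forall>v\<in>\<tau>. g \<bullet> v = 0"
  shows "g = ((g \<bullet> a) / (a \<bullet> a)) *\<^sub>R a"
proof -
  define w where "w = g - ((g \<bullet> a) / (a \<bullet> a)) *\<^sub>R a"
  have "a \<bullet> w = 0" unfolding w_def using assms(2) by (simp add: inner_diff_right inner_commute)
  then have "w \<in> span \<tau>" using span_eq_hyperplane[OF assms(1-3)] by blast
  moreover have "span \<tau> \<subseteq> {x. g \<bullet> x = 0}"
    by (rule span_minimal) (use assms(4) subspace_hyperplane in auto)
  ultimately have "g \<bullet> w = 0" by blast
  with \<open>a \<bullet> w = 0\<close> have "w \<bullet> w = 0" unfolding w_def by (simp add: inner_diff_left inner_commute)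
  then show ?thesis unfolding w_def by simp
qed

lemma ball_meets_open_halfspace:
  fixes a p :: "'a::real_inner"
  assumes "a \<noteq> 0" "e > 0"
  obtains x where "x \<in> ball p e" "a \<bullet> x < a \<bullet> p"
proof
  define t where "t = e / (2 * norm a)"
  have t: "t > 0" using assms by (simp add: t_def)
  show "p - t *\<^sub>R a \<in> ball p e" using assms by (simp add: t_def dist_norm)
  show "a \<bullet> (p - t *\<^sub>R a) < a \<bullet> p" using t assms by (simp add: inner_diff_right)
qed

lemma polyhedron_halfspaces:
  fixes S :: "'a::euclidean_space set"
  assumes "polyhedron S"
  obtains C :: "('a \<times> real) set"
    where "finite C" "S = {x. \<forall>(g, b)\<in>C. g \<bullet> x \<le> b}" "\<forall>(g, b)\<in>C. g \<noteq> 0"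
proof -
  obtain F where F: "finite F" "S = \<Inter>F" "\<forall>h\<in>F. \<exists>g b. g \<noteq> 0 \<and> h = {x. g \<bullet> x \<le> b}"
    using assms unfolding polyhedron_def by blast
  then have "\<forall>h\<in>F. \<exists>q. fst q \<noteq> 0 \<and> h = {x. fst q \<bullet> x \<le> snd q}" by auto
  then obtain gb where gb: "\<forall>h\<in>F. fst (gb h) \<noteq> 0 \<and> h = {x. fst (gb h) \<bullet> x \<le> snd (gb h)}"
    by (rule bchoice[THEN exE]) blast
  show thesis
  proof (rule that[of "gb ` F"])
    show "finite (gb ` F)" using F(1) by simp
    show "S = {x. \<forall>(g, b)\<in>gb ` F. g \<bullet> x \<le> b}"
      using F(2) gb by (auto simp: case_prod_beta)
    show "\<forall>(g, b)\<in>gb ` F. g \<noteq> 0" using gb by (auto simp: case_prod_beta)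
  qed
qed

lemma halfspaces_locally_active:
  fixes C :: "('a::real_inner \<times> real) set"
  assumes "finite C" "\<forall>(g, b)\<in>C. g \<bullet> p \<le> b"
  obtains e where "e > 0"
    "\<And>x. x \<in> ball p e \<Longrightarrow> \<forall>(g, b)\<in>C. g \<bullet> p = b \<longrightarrow> g \<bullet> x \<le> b \<Longrightarrow>
       \<forall>(g, b)\<in>C. g \<bullet> x \<le> b"
proof -
  define U where "U = (\<Inter>q\<in>{q\<in>C. fst q \<bullet> p \<noteq> snd q}. {x. fst q \<bullet> x < snd q})"
  have "open U" unfolding U_def using assms(1) by (intro open_INT) (auto intro: open_halfspace_lt)
  moreover have "p \<in> U" unfolding U_def using assms(2) by force
  ultimately obtain e where "e > 0" "ball p e \<subseteq> U" using open_contains_ball by blast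
  show thesis
  proof (rule that[OF \<open>e > 0\<close>])
    fix x assume "x \<in> ball p e" and active: "\<forall>(g, b)\<in>C. g \<bullet> p = b \<longrightarrow> g \<bullet> x \<le> b"
    then have "x \<in> U" using \<open>ball p e \<subseteq> U\<close> by blast
    show "\<forall>(g, b)\<in>C. g \<bullet> x \<le> b"
    proof clarify
      fix g b assume "(g, b) \<in> C"
      show "g \<bullet> x \<le> b"
      proof (cases "g \<bullet> p = b")
        case True
        with active \<open>(g, b) \<in> C\<close> show ?thesis by blast
      next
        case False
        with \<open>x \<in> U\<close> \<open>(g, b) \<in> C\<close> show ?thesis unfolding U_def by fastforce
      qed
    qed
  qed
qed

lemma halfspaces_active_at_proper_face:
  fixes C :: "('a::euclidean_space \<times> real) set"
  assumes "finite C" and S: "S = {x. \<forall>(g, b)\<in>C. g \<bullet> x \<le> b}"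
    and "T face_of S" "T \<noteq> S" "p \<in> T"
  obtains g b where "(g, b) \<in> C" "g \<bullet> p = b"
proof (rule ccontr)
  assume none: "\<not> thesis"
  have "p \<in> S" using assms(3,5) face_of_imp_subset by blast
  then have "\<forall>(g, b)\<in>C. g \<bullet> p \<le> b" unfolding S mem_Collect_eq .
  from halfspaces_locally_active[OF assms(1) this] obtain e where "e > 0" and e: "\<And>x. x \<in> ball p e \<Longrightarrow>
      \<forall>(g, b)\<in>C. g \<bullet> p = b \<longrightarrow> g \<bullet> x \<le> b \<Longrightarrow> \<forall>(g, b)\<in>C. g \<bullet> x \<le> b"
    by blast
  have "ball p e \<subseteq> S"
  proof
    fix x assume "x \<in> ball p e"
    moreover have "\<forall>(g, b)\<in>C. g \<bullet> p = b \<longrightarrow> g \<bullet> x \<le> b" using none that by blast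
    ultimately show "x \<in> S" unfolding S mem_Collect_eq by (rule e)
  qed
  then have "p \<in> rel_interior S"
    using \<open>e > 0\<close> interior_subset_rel_interior by (metis centre_in_ball interior_maximal open_ball subsetD)
  then show False using face_of_disjoint_rel_interior[OF assms(3,4)] assms(5) by blast
qed

lemma supporting_halfspace_contains_face:
  fixes S :: "'a::euclidean_space set"
  assumes "convex S" "T face_of S" "p \<in> rel_interior T" "\<forall>x\<in>S. g \<bullet> x \<le> b" "g \<bullet> p = b"
  shows "\<forall>v\<in>T. g \<bullet> v = b"
proof -
  have "(S \<inter> {x. g \<bullet> x = b}) face_of S"
    using face_of_Int_supporting_hyperplane_le assms(1,4) by blast
  moreover have "T \<subseteq> S" using assms(2) face_of_imp_subset by blast
  moreover have "p \<in> (S \<inter> {x. g \<bullet> x = b}) \<inter> rel_interior T"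
    using assms(3,5) rel_interior_subset \<open>T \<subseteq> S\<close> by blast
  ultimately have "T \<subseteq> S \<inter> {x. g \<bullet> x = b}"
    using subset_of_face_of[of "S \<inter> {x. g \<bullet> x = b}" S T] by blast
  then show ?thesis by blast
qed

lemma supporting_halfspace_at_hyperplane_face:
  fixes \<sigma> \<tau> :: "(real^'d) set"
  assumes "convex \<sigma>" "\<tau> face_of \<sigma>" "0 \<in> \<tau>" "dim \<tau> = CARD('d) - 1" "p \<in> rel_interior \<tau>"
    and "\<forall>x\<in>\<sigma>. g \<bullet> x \<le> b" "g \<bullet> p = b" "g \<noteq> 0"
  shows "g \<bullet> normal_of \<tau> \<noteq> 0" "g \<bullet> x \<le> b \<longleftrightarrow> (g \<bullet> normal_of \<tau>) * (normal_of \<tau> \<bullet> x) \<le> 0"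
proof -
  define a where "a = normal_of \<tau>"
  have "dim \<tau> < CARD('d)" using assms(4) by simp
  note a = normal_of[OF this, folded a_def]
  have g: "\<forall>v\<in>\<tau>. g \<bullet> v = b" using supporting_halfspace_contains_face assms(1,2,5-7) by blast
  then have "b = 0" using assms(3) by force
  define k where "k = (g \<bullet> a) / (a \<bullet> a)"
  have "g = k *\<^sub>R a" unfolding k_def using normals_of_hyperplane_parallel[OF assms(4) a] g \<open>b = 0\<close> by simp
  then show "g \<bullet> normal_of \<tau> \<noteq> 0" using assms(8) a(1) unfolding a_def by auto
  have "(g \<bullet> a) * (a \<bullet> x) = (a \<bullet> a) * (g \<bullet> x)" using \<open>g = k *\<^sub>R a\<close> by simp
  moreover have "a \<bullet> a > 0" using a(1) by simp
  ultimately show "g \<bullet> x \<le> b \<longleftrightarrow> (g \<bullet> normal_of \<tau>) * (normal_of \<tau> \<bullet> x) \<le> 0"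
    unfolding a_def[symmetric] \<open>b = 0\<close> using mult_le_cancel_left_pos[of "a \<bullet> a" "g \<bullet> x" 0] by simp
qed

lemma full_dim_not_subset_hyperplane:
  fixes \<sigma> \<tau> :: "(real^'d) set"
  assumes "dim \<sigma> = CARD('d)" "dim \<tau> = CARD('d) - 1"
  shows "\<not> (\<forall>x\<in>\<sigma>. normal_of \<tau> \<bullet> x = 0)"
proof
  assume "\<forall>x\<in>\<sigma>. normal_of \<tau> \<bullet> x = 0"
  moreover have "dim \<tau> < CARD('d)" using assms(2) by simp
  ultimately have "\<sigma> \<subseteq> span \<tau>" using span_eq_hyperplane[OF assms(2) normal_of] by blast
  then have "dim \<sigma> \<le> dim \<tau>" by (metis dim_span dim_subset)
  then show False using assms \<open>dim \<tau> < CARD('d)\<close> by simp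
qed

lemma sgn_mult_nonpos_iff: "(k::real) \<noteq> 0 \<Longrightarrow> k * y \<le> 0 \<longleftrightarrow> sgn k * y \<le> 0"
  by (cases "k > 0") (auto simp: mult_le_0_iff)

lemma full_dim_polyhedron_locally_halfspace:
  fixes \<sigma> \<tau> :: "(real^'d) set"
  assumes poly: "polyhedron \<sigma>" and dim\<sigma>: "dim \<sigma> = CARD('d)" and face: "\<tau> face_of \<sigma>"
    and "0 \<in> \<tau>" and dim\<tau>: "dim \<tau> = CARD('d) - 1" and p: "p \<in> rel_interior \<tau>"
  obtains s e where "s = 1 \<or> s = -1" "e > 0" "\<forall>x\<in>\<sigma>. s * (normal_of \<tau> \<bullet> x) \<le> 0"
    "\<forall>x\<in>ball p e. s * (normal_of \<tau> \<bullet> x) \<le> 0 \<longrightarrow> x \<in> \<sigma>"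
proof -
  define a where "a = normal_of \<tau>"
  define side where "side g = sgn (g \<bullet> a)" for g
  have "convex \<sigma>" using poly polyhedron_imp_convex by blast
  have p\<sigma>: "p \<in> \<sigma>" using p rel_interior_subset face_of_imp_subset[OF face] by blast
  obtain C where C: "finite C" "\<sigma> = {x. \<forall>(g, b)\<in>C. g \<bullet> x \<le> b}" "\<forall>(g, b)\<in>C. g \<noteq> 0"
    by (rule polyhedron_halfspaces[OF poly])
  have sat: "g \<bullet> x \<le> b" if "x \<in> \<sigma>" "(g, b) \<in> C" for x g b
    using bspec[OF that(1)[unfolded C(2) mem_Collect_eq] that(2)] by simp
  have active: "side g = 1 \<or> side g = -1" "\<And>x. g \<bullet> x \<le> b \<longleftrightarrow> side g * (a \<bullet> x) \<le> 0"
    if "(g, b) \<in> C" "g \<bullet> p = b" for g b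
  proof -
    have "\<forall>x\<in>\<sigma>. g \<bullet> x \<le> b" "g \<noteq> 0" using C that(1) by auto
    note halfspace = supporting_halfspace_at_hyperplane_face[OF \<open>convex \<sigma>\<close> face assms(4) dim\<tau> p this(1) that(2) this(2)]
    show "side g = 1 \<or> side g = -1" using halfspace(1) unfolding side_def a_def by (auto simp: sgn_if)
    show "g \<bullet> x \<le> b \<longleftrightarrow> side g * (a \<bullet> x) \<le> 0" for x
      using halfspace(1) unfolding halfspace(2) side_def a_def by (rule sgn_mult_nonpos_iff)
  qed
  have "\<forall>(g, b)\<in>C. g \<bullet> p \<le> b" using p\<sigma> unfolding C(2) mem_Collect_eq .
  from halfspaces_locally_active[OF C(1) this] obtain e where "e > 0" and e: "\<And>x. x \<in> ball p e \<Longrightarrow>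
      \<forall>(g, b)\<in>C. g \<bullet> p = b \<longrightarrow> g \<bullet> x \<le> b \<Longrightarrow> \<forall>(g, b)\<in>C. g \<bullet> x \<le> b"
    by blast
  have "dim \<tau> < CARD('d)" using dim\<tau> by simp
  then have "\<tau> \<noteq> \<sigma>" using dim\<sigma> by auto
  then obtain g\<^sub>0 b\<^sub>0 where active\<^sub>0: "(g\<^sub>0, b\<^sub>0) \<in> C" "g\<^sub>0 \<bullet> p = b\<^sub>0"
    using halfspaces_active_at_proper_face[OF C(1,2) face] p rel_interior_subset by blast
  define s where "s = side g\<^sub>0"
  \<comment> \<open>Active constraints of opposite sides would squeeze \<open>\<sigma>\<close> into the hyperplane of \<open>\<tau>\<close>.\<close>
  have same_side: "side g = s" if "(g, b) \<in> C" "g \<bullet> p = b" for g b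
  proof (rule ccontr)
    assume "side g \<noteq> s"
    then have opp: "side g = - s" "s \<noteq> 0"
      using active(1)[OF that] active(1)[OF active\<^sub>0] unfolding s_def by auto
    have "a \<bullet> x = 0" if "x \<in> \<sigma>" for x
    proof -
      have "side g * (a \<bullet> x) \<le> 0" "s * (a \<bullet> x) \<le> 0"
        using active(2) sat[OF that] \<open>(g, b) \<in> C\<close> \<open>g \<bullet> p = b\<close> active\<^sub>0 unfolding s_def by blast+
      then show ?thesis using opp by (simp add: mult_le_0_iff)
    qed
    then show False using full_dim_not_subset_hyperplane[OF dim\<sigma> dim\<tau>] unfolding a_def by blast
  qed
  show thesis
  proof (rule that[of s e])
    show "s = 1 \<or> s = -1" using active(1)[OF active\<^sub>0] unfolding s_def .
    show "\<forall>x\<in>\<sigma>. s * (normal_of \<tau> \<bullet> x) \<le> 0"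
      using active(2)[OF active\<^sub>0] sat active\<^sub>0(1) unfolding s_def a_def by blast
    show "\<forall>x\<in>ball p e. s * (normal_of \<tau> \<bullet> x) \<le> 0 \<longrightarrow> x \<in> \<sigma>"
    proof clarify
      fix x assume x: "x \<in> ball p e" "s * (normal_of \<tau> \<bullet> x) \<le> 0"
      have "g \<bullet> x \<le> b" if "(g, b) \<in> C" "g \<bullet> p = b" for g b
        using active(2)[OF that] same_side[OF that] x(2) unfolding a_def by simp
      then have "\<forall>(g, b)\<in>C. g \<bullet> p = b \<longrightarrow> g \<bullet> x \<le> b" by blast
      then show "x \<in> \<sigma>" unfolding C(2) mem_Collect_eq by (rule e[OF x(1)])
    qed
  qed fact
qed

lemma incidence_cases: "\<delta> \<subseteq> \<sigma> \<Longrightarrow> incidence \<sigma> \<delta> = 1 \<or> incidence \<sigma> \<delta> = -1"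
  unfolding incidence_def by simp

lemma incidence_eq_side:
  fixes \<sigma> \<tau> :: "(real^'d) set"
  assumes "\<tau> \<subseteq> \<sigma>" "dim \<tau> < CARD('d)" "p \<in> \<tau>" "s = 1 \<or> s = -1" "e > 0"
    and "\<forall>x\<in>\<sigma>. s * (normal_of \<tau> \<bullet> x) \<le> 0"
    and "\<forall>x\<in>ball p e. s * (normal_of \<tau> \<bullet> x) \<le> 0 \<longrightarrow> x \<in> \<sigma>"
  shows "real_of_int (incidence \<sigma> \<tau>) = s"
  using assms(4)
proof
  assume "s = 1"
  then show ?thesis using assms(1,6) unfolding incidence_def by simp
next
  assume s: "s = -1"
  note a = normal_of[OF assms(2)]
  obtain x where "x \<in> ball p e" "(- normal_of \<tau>) \<bullet> x < (- normal_of \<tau>) \<bullet> p"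
    using ball_meets_open_halfspace[of "- normal_of \<tau>" e p] a(1) assms(5) by auto
  moreover have "normal_of \<tau> \<bullet> p = 0" using a(2) assms(3) by blast
  ultimately have "x \<in> \<sigma>" "normal_of \<tau> \<bullet> x > 0" using assms(7) s by auto
  then show ?thesis using assms(1) s unfolding incidence_def by force
qed

lemma fan_full_cone_locally_halfspace:
  fixes \<Sigma> :: "(real^'d) set set"
  assumes fan: "is_fan \<Sigma>" and \<tau>: "\<tau> \<in> codim1 \<Sigma>" and \<sigma>: "\<sigma> \<in> cones_dim \<Sigma> CARD('d)"
    and "\<tau> \<subseteq> \<sigma>" and p: "p \<in> rel_interior \<tau>"
  obtains e where "e > 0" "\<forall>x\<in>\<sigma>. real_of_int (incidence \<sigma> \<tau>) * (normal_of \<tau> \<bullet> x) \<le> 0"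
    "\<forall>x\<in>ball p e. real_of_int (incidence \<sigma> \<tau>) * (normal_of \<tau> \<bullet> x) \<le> 0 \<longrightarrow> x \<in> \<sigma>"
proof -
  have \<sigma>': "\<sigma> \<in> \<Sigma>" "dim \<sigma> = CARD('d)" using \<sigma> unfolding cones_dim_def by auto
  have \<tau>': "\<tau> \<in> \<Sigma>" "dim \<tau> = CARD('d) - 1" "dim \<tau> < CARD('d)" using codim1_D[OF \<tau>] by auto
  obtain s e where "s = 1 \<or> s = -1" "e > 0" "\<forall>x\<in>\<sigma>. s * (normal_of \<tau> \<bullet> x) \<le> 0"
    "\<forall>x\<in>ball p e. s * (normal_of \<tau> \<bullet> x) \<le> 0 \<longrightarrow> x \<in> \<sigma>"
    by (rule full_dim_polyhedron_locally_halfspace[OF fan_polyhedron[OF fan \<sigma>'(1)] \<sigma>'(2)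
          fan_subset_imp_face_of[OF fan \<sigma>'(1) \<tau>'(1) \<open>\<tau> \<subseteq> \<sigma>\<close>] fan_contains_0[OF fan \<tau>'(1)] \<tau>'(2) p])
  moreover have "real_of_int (incidence \<sigma> \<tau>) = s"
    using incidence_eq_side[OF \<open>\<tau> \<subseteq> \<sigma>\<close> \<tau>'(3) rel_interior_subset[THEN subsetD, OF p]] calculation
    by blast
  ultimately show thesis using that by simp
qed

lemma fan_full_cones_Int_eq_codim1:
  fixes \<Sigma> :: "(real^'d) set set"
  assumes fan: "is_fan \<Sigma>" and \<tau>: "\<tau> \<in> codim1 \<Sigma>"
    and \<sigma>: "\<sigma>\<^sub>1 \<in> cones_dim \<Sigma> CARD('d)" "\<sigma>\<^sub>2 \<in> cones_dim \<Sigma> CARD('d)" "\<sigma>\<^sub>1 \<noteq> \<sigma>\<^sub>2"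
    and "\<tau> \<subseteq> \<sigma>\<^sub>1" "\<tau> \<subseteq> \<sigma>\<^sub>2"
  shows "\<sigma>\<^sub>1 \<inter> \<sigma>\<^sub>2 = \<tau>"
proof -
  have \<sigma>': "\<sigma>\<^sub>1 \<in> \<Sigma>" "\<sigma>\<^sub>2 \<in> \<Sigma>" "dim \<sigma>\<^sub>1 = CARD('d)" "dim \<sigma>\<^sub>2 = CARD('d)"
    using \<sigma> unfolding cones_dim_def by auto
  have "0 \<in> \<sigma>\<^sub>1 \<inter> \<sigma>\<^sub>2" using fan_contains_0[OF fan] \<sigma>'(1,2) by blast
  then have I: "\<sigma>\<^sub>1 \<inter> \<sigma>\<^sub>2 \<in> \<Sigma>"
    using fan_face_of_mem[OF fan \<sigma>'(1) fan_Int_face_of[OF fan \<sigma>'(1,2)]] by blast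
  have "\<sigma>\<^sub>1 \<inter> \<sigma>\<^sub>2 \<noteq> \<sigma>\<^sub>1"
  proof
    assume "\<sigma>\<^sub>1 \<inter> \<sigma>\<^sub>2 = \<sigma>\<^sub>1"
    then have "\<sigma>\<^sub>1 \<subseteq> \<sigma>\<^sub>2" by blast
    then show False using fan_subset_eq_if_dim_le[OF fan \<sigma>'(2,1)] \<sigma>'(3,4) \<sigma>(3) by simp
  qed
  then have "\<not> dim \<sigma>\<^sub>1 \<le> dim (\<sigma>\<^sub>1 \<inter> \<sigma>\<^sub>2)"
    using fan_subset_eq_if_dim_le[OF fan \<sigma>'(1) I] by blast
  then have "dim (\<sigma>\<^sub>1 \<inter> \<sigma>\<^sub>2) \<le> dim \<tau>" using \<sigma>'(3) codim1_D(2)[OF \<tau>] by simp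
  then show ?thesis
    using fan_subset_eq_if_dim_le[OF fan I codim1_D(1)[OF \<tau>]] assms(6,7) by blast
qed

lemma fan_incidence_opposite:
  fixes \<Sigma> :: "(real^'d) set set"
  assumes fan: "is_fan \<Sigma>" and \<tau>: "\<tau> \<in> codim1 \<Sigma>"
    and \<sigma>: "\<sigma>\<^sub>1 \<in> cones_dim \<Sigma> CARD('d)" "\<sigma>\<^sub>2 \<in> cones_dim \<Sigma> CARD('d)" "\<sigma>\<^sub>1 \<noteq> \<sigma>\<^sub>2"
    and sub: "\<tau> \<subseteq> \<sigma>\<^sub>1" "\<tau> \<subseteq> \<sigma>\<^sub>2"
  shows "incidence \<sigma>\<^sub>1 \<tau> = - incidence \<sigma>\<^sub>2 \<tau>"
  \<comment> \<open>Equal incidences put both cones on the same side of \<open>\<tau>\<close>; then points on that side close to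
    a relative interior point of \<open>\<tau>\<close> lie in \<open>\<sigma>\<^sub>1 \<inter> \<sigma>\<^sub>2 = \<tau>\<close> but off its hyperplane.\<close>
proof (rule ccontr)
  assume "incidence \<sigma>\<^sub>1 \<tau> \<noteq> - incidence \<sigma>\<^sub>2 \<tau>"
  then have same: "incidence \<sigma>\<^sub>2 \<tau> = incidence \<sigma>\<^sub>1 \<tau>"
    using incidence_cases[OF sub(1)] incidence_cases[OF sub(2)] by auto
  have "convex \<tau>" "0 \<in> \<tau>"
    using fan_polyhedron[OF fan] fan_contains_0[OF fan] codim1_D(1)[OF \<tau>] polyhedron_imp_convex by blast+
  then obtain p where p: "p \<in> rel_interior \<tau>" using rel_interior_eq_empty by blast
  obtain e\<^sub>1 where e\<^sub>1: "e\<^sub>1 > 0" "\<forall>x\<in>\<sigma>\<^sub>1. real_of_int (incidence \<sigma>\<^sub>1 \<tau>) * (normal_of \<tau> \<bullet> x) \<le> 0"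
    "\<forall>x\<in>ball p e\<^sub>1. real_of_int (incidence \<sigma>\<^sub>1 \<tau>) * (normal_of \<tau> \<bullet> x) \<le> 0 \<longrightarrow> x \<in> \<sigma>\<^sub>1"
    by (rule fan_full_cone_locally_halfspace[OF fan \<tau> \<sigma>(1) sub(1) p])
  obtain e\<^sub>2 where e\<^sub>2: "e\<^sub>2 > 0" "\<forall>x\<in>\<sigma>\<^sub>2. real_of_int (incidence \<sigma>\<^sub>2 \<tau>) * (normal_of \<tau> \<bullet> x) \<le> 0"
    "\<forall>x\<in>ball p e\<^sub>2. real_of_int (incidence \<sigma>\<^sub>2 \<tau>) * (normal_of \<tau> \<bullet> x) \<le> 0 \<longrightarrow> x \<in> \<sigma>\<^sub>2"
    by (rule fan_full_cone_locally_halfspace[OF fan \<tau> \<sigma>(2) sub(2) p])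
  define c where "c = real_of_int (incidence \<sigma>\<^sub>1 \<tau>) *\<^sub>R normal_of \<tau>"
  note a = normal_of[OF codim1_D(3)[OF \<tau>]]
  have "c \<noteq> 0" using a(1) incidence_cases[OF sub(1)] unfolding c_def by auto
  moreover have "min e\<^sub>1 e\<^sub>2 > 0" using e\<^sub>1(1) e\<^sub>2(1) by simp
  ultimately obtain x where x: "x \<in> ball p (min e\<^sub>1 e\<^sub>2)" "c \<bullet> x < c \<bullet> p"
    by (rule ball_meets_open_halfspace)
  have "c \<bullet> p = 0"
    using a(2) p rel_interior_subset unfolding c_def by auto
  with x have "x \<in> \<sigma>\<^sub>1 \<inter> \<sigma>\<^sub>2" "c \<bullet> x < 0"
    using e\<^sub>1(3) e\<^sub>2(3) unfolding c_def same by auto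
  moreover have "\<sigma>\<^sub>1 \<inter> \<sigma>\<^sub>2 = \<tau>" by (rule fan_full_cones_Int_eq_codim1[OF assms])
  ultimately show False using a(2) unfolding c_def by auto
qed

definition full_cones_containing :: "(real^'d) set set \<Rightarrow> (real^'d) set \<Rightarrow> (real^'d) set set" where
  "full_cones_containing \<Sigma> \<tau> = {\<sigma> \<in> cones_dim \<Sigma> CARD('d). \<tau> \<subseteq> \<sigma>}"

lemma full_cones_containing_codim1_cases:
  fixes \<Sigma> :: "(real^'d) set set"
  assumes fan: "is_fan \<Sigma>" and \<tau>: "\<tau> \<in> codim1 \<Sigma>"
  obtains "full_cones_containing \<Sigma> \<tau> = {}"
  | \<sigma> where "full_cones_containing \<Sigma> \<tau> = {\<sigma>}"
  | \<sigma>\<^sub>1 \<sigma>\<^sub>2 where "\<sigma>\<^sub>1 \<noteq> \<sigma>\<^sub>2" "full_cones_containing \<Sigma> \<tau> = {\<sigma>\<^sub>1, \<sigma>\<^sub>2}" "\<sigma>\<^sub>1 \<inter> \<sigma>\<^sub>2 = \<tau>"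
      "incidence \<sigma>\<^sub>1 \<tau> = - incidence \<sigma>\<^sub>2 \<tau>"
proof -
  let ?S = "full_cones_containing \<Sigma> \<tau>"
  have mem: "\<sigma> \<in> ?S \<longleftrightarrow> \<sigma> \<in> cones_dim \<Sigma> CARD('d) \<and> \<tau> \<subseteq> \<sigma>" for \<sigma>
    unfolding full_cones_containing_def by simp
  have opp: "incidence \<sigma> \<tau> = - incidence \<sigma>' \<tau>" if "\<sigma> \<in> ?S" "\<sigma>' \<in> ?S" "\<sigma> \<noteq> \<sigma>'" for \<sigma> \<sigma>'
    using fan_incidence_opposite[OF fan \<tau> _ _ that(3)] that(1,2) unfolding mem by blast
  show thesis
  proof (cases "?S = {}")
    case False
    then obtain \<sigma>\<^sub>1 where \<sigma>\<^sub>1: "\<sigma>\<^sub>1 \<in> ?S" by blast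
    show thesis
    proof (cases "?S = {\<sigma>\<^sub>1}")
      case False
      then obtain \<sigma>\<^sub>2 where \<sigma>\<^sub>2: "\<sigma>\<^sub>2 \<in> ?S" "\<sigma>\<^sub>1 \<noteq> \<sigma>\<^sub>2" using \<sigma>\<^sub>1 by blast
      have "\<sigma> \<in> {\<sigma>\<^sub>1, \<sigma>\<^sub>2}" if "\<sigma> \<in> ?S" for \<sigma>
      proof (rule ccontr)
        assume "\<sigma> \<notin> {\<sigma>\<^sub>1, \<sigma>\<^sub>2}"
        then have "incidence \<sigma> \<tau> = 0"
          using opp[OF that \<sigma>\<^sub>1] opp[OF that \<sigma>\<^sub>2(1)] opp[OF \<sigma>\<^sub>1 \<sigma>\<^sub>2] by auto
        moreover have "\<tau> \<subseteq> \<sigma>" using that unfolding mem by blast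
        ultimately show False using incidence_cases[of \<tau> \<sigma>] by simp
      qed
      then have "?S = {\<sigma>\<^sub>1, \<sigma>\<^sub>2}" using \<sigma>\<^sub>1 \<sigma>\<^sub>2(1) by blast
      moreover have "\<sigma>\<^sub>1 \<inter> \<sigma>\<^sub>2 = \<tau>"
        using fan_full_cones_Int_eq_codim1[OF fan \<tau> _ _ \<sigma>\<^sub>2(2)] \<sigma>\<^sub>1 \<sigma>\<^sub>2(1) unfolding mem by blast
      ultimately show thesis by (rule that(3)[OF \<sigma>\<^sub>2(2) _ _ opp[OF \<sigma>\<^sub>1 \<sigma>\<^sub>2]])
    qed (rule that(2))
  qed (rule that(1))
qed

lemma full_dim_cones_Int_sigma_neg:
  fixes \<Sigma> :: "(real^'d) set set"
  shows "cones_dim \<Sigma> CARD('d) \<inter> sigma_neg \<Sigma> \<alpha> = {}"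
proof -
  have "dim \<gamma> < CARD('d)" if \<gamma>: "\<gamma> \<in> sigma_neg \<Sigma> \<alpha>" for \<gamma>
  proof -
    obtain \<tau> where "\<tau> \<in> codim1 \<Sigma>" "\<gamma> \<subseteq> \<tau>" using \<gamma> unfolding sigma_neg_def by blast
    then show ?thesis using dim_subset codim1_D(3) le_less_trans by blast
  qed
  then show ?thesis unfolding cones_dim_def by fastforce
qed

lemma d_top_eq_sum_full_cones_containing:
  fixes \<Sigma> :: "(real^'d) set set"
  assumes "is_fan \<Sigma>"
  shows "d_top \<Sigma> \<alpha> F \<tau> = (\<Sum>\<sigma>\<in>full_cones_containing \<Sigma> \<tau>. of_int (incidence \<sigma> \<tau>) * F \<sigma>)"
proof -
  have "finite \<Sigma>" using assms unfolding is_fan_def by (elim conjE)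
  then have fin: "finite (cones_dim \<Sigma> CARD('d))" unfolding cones_dim_def by simp
  have "d_top \<Sigma> \<alpha> F \<tau> = (\<Sum>\<sigma>\<in>cones_dim \<Sigma> CARD('d). of_int (incidence \<sigma> \<tau>) * F \<sigma>)"
    unfolding d_top_def using full_dim_cones_Int_sigma_neg[of \<Sigma> \<alpha>] by (simp add: Diff_triv)
  also have "\<dots> = (\<Sum>\<sigma>\<in>full_cones_containing \<Sigma> \<tau>. of_int (incidence \<sigma> \<tau>) * F \<sigma>)"
    unfolding full_cones_containing_def
    by (rule sum.mono_neutral_right[OF fin]) (auto simp: incidence_def)
  finally show ?thesis .
qed

lemma Jideal_codim1:
  fixes \<Sigma> :: "(real^'d) set set"
  assumes fan: "is_fan \<Sigma>" and pure: "pure_fan \<Sigma>"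
    and \<tau>: "\<tau> \<in> codim1 \<Sigma>" "\<tau> \<notin> sigma_neg \<Sigma> \<alpha>"
  shows "Jideal \<Sigma> \<alpha> \<tau> = {x. gen_pow \<alpha> \<tau> dvd x}"
proof -
  have "\<tau> \<notin> facets \<Sigma>"
    using facets_eq_full_dim_cones[OF fan pure] codim1_D(3)[OF \<tau>(1)] unfolding cones_dim_def by auto
  moreover have "{\<tau>' \<in> codim1 \<Sigma> - sigma_neg \<Sigma> \<alpha>. \<tau> \<subseteq> \<tau>'} = {\<tau>}"
    using codim1_subset_eq[OF fan \<tau>(1)] \<tau> by blast
  ultimately have "Jideal \<Sigma> \<alpha> \<tau> = {q \<tau> * gen_pow \<alpha> \<tau> | q. True}"
    unfolding Jideal_def by simp
  also have "\<dots> = {x. gen_pow \<alpha> \<tau> dvd x}"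
  proof (intro set_eqI iffI)
    fix x assume "x \<in> {x. gen_pow \<alpha> \<tau> dvd x}"
    then obtain k where "x = k * gen_pow \<alpha> \<tau>" by (auto elim!: dvdE simp: mult.commute)
    then show "x \<in> {q \<tau> * gen_pow \<alpha> \<tau> | q. True}" by (intro CollectI exI[of _ "\<lambda>_. k"]) simp
  qed auto
  finally show ?thesis .
qed

lemma gen_pow_sigma_neg:
  fixes \<Sigma> :: "(real^'d) set set"
  assumes "is_fan \<Sigma>" "\<tau> \<in> codim1 \<Sigma>" "\<tau> \<in> sigma_neg \<Sigma> \<alpha>"
  shows "gen_pow \<alpha> \<tau> = 1"
proof -
  obtain \<tau>' where "\<tau>' \<in> codim1 \<Sigma>" "\<alpha> \<tau>' = -1" "\<tau> \<subseteq> \<tau>'"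
    using assms(3) unfolding sigma_neg_def by blast
  then show ?thesis using codim1_subset_eq[OF assms(1,2)] unfolding gen_pow_def by force
qed

lemma codim1_bdry_iff:
  fixes \<Sigma> :: "(real^'d) set set"
  assumes fan: "is_fan \<Sigma>" and pure: "pure_fan \<Sigma>" and \<tau>: "\<tau> \<in> codim1 \<Sigma>"
  shows "\<tau> \<in> bdry \<Sigma> \<longleftrightarrow> card (full_cones_containing \<Sigma> \<tau>) = 1"
proof -
  have "full_cones_containing \<Sigma> \<tau>' = {\<sigma> \<in> facets \<Sigma>. \<tau>' \<subseteq> \<sigma>}" for \<tau>'
    unfolding full_cones_containing_def facets_eq_full_dim_cones[OF fan pure] ..
  then show ?thesis
    using codim1_subset_eq[OF fan \<tau>] codim1_D(1)[OF \<tau>] \<tau> unfolding bdry_def by auto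
qed

lemma dvd_sign_mult_iff:
  fixes g y :: "'a::comm_ring_1"
  assumes "i = 1 \<or> i = -1"
  shows "g dvd of_int i * y \<longleftrightarrow> g dvd y"
  using assms by auto

definition spline_conditions_at ::
    "(real^'d) set set \<Rightarrow> ((real^'d) set \<Rightarrow> int) \<Rightarrow> ((real^'d) set \<Rightarrow> 'd spoly) \<Rightarrow> (real^'d) set \<Rightarrow> bool"
  where
  "spline_conditions_at \<Sigma> \<alpha> F \<tau> \<longleftrightarrow>
     (\<forall>\<sigma>\<^sub>1\<in>cones_dim \<Sigma> CARD('d). \<forall>\<sigma>\<^sub>2\<in>cones_dim \<Sigma> CARD('d).
        \<sigma>\<^sub>1 \<inter> \<sigma>\<^sub>2 = \<tau> \<longrightarrow> gen_pow \<alpha> \<tau> dvd (F \<sigma>\<^sub>1 - F \<sigma>\<^sub>2))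
   \<and> (\<tau> \<in> bdry \<Sigma> \<longrightarrow> (\<forall>\<sigma>\<in>cones_dim \<Sigma> CARD('d). \<tau> \<subseteq> \<sigma> \<longrightarrow> gen_pow \<alpha> \<tau> dvd F \<sigma>))"

lemma spline_module_iff_spline_conditions_at:
  fixes \<Sigma> :: "(real^'d) set set"
  shows "F \<in> spline_module \<Sigma> \<alpha> \<longleftrightarrow>
     (\<forall>\<gamma>. \<gamma> \<notin> cones_dim \<Sigma> CARD('d) \<longrightarrow> F \<gamma> = 0) \<and> (\<forall>\<tau>\<in>codim1 \<Sigma>. spline_conditions_at \<Sigma> \<alpha> F \<tau>)"
  unfolding spline_module_def spline_conditions_at_def by auto

lemma spline_conditions_at_iff_full_cones_containing:
  fixes \<Sigma> :: "(real^'d) set set"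
  assumes fan: "is_fan \<Sigma>" and pure: "pure_fan \<Sigma>" and \<tau>: "\<tau> \<in> codim1 \<Sigma>"
  shows "spline_conditions_at \<Sigma> \<alpha> F \<tau> \<longleftrightarrow>
    (\<forall>\<sigma>\<^sub>1\<in>full_cones_containing \<Sigma> \<tau>. \<forall>\<sigma>\<^sub>2\<in>full_cones_containing \<Sigma> \<tau>.
        \<sigma>\<^sub>1 \<noteq> \<sigma>\<^sub>2 \<longrightarrow> gen_pow \<alpha> \<tau> dvd (F \<sigma>\<^sub>1 - F \<sigma>\<^sub>2))
    \<and> (card (full_cones_containing \<Sigma> \<tau>) = 1 \<longrightarrow> (\<forall>\<sigma>\<in>full_cones_containing \<Sigma> \<tau>. gen_pow \<alpha> \<tau> dvd F \<sigma>))"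
proof -
  have "\<sigma>\<^sub>1 \<inter> \<sigma>\<^sub>2 = \<tau> \<longleftrightarrow> \<tau> \<subseteq> \<sigma>\<^sub>1 \<and> \<tau> \<subseteq> \<sigma>\<^sub>2 \<and> \<sigma>\<^sub>1 \<noteq> \<sigma>\<^sub>2 \<or> \<sigma>\<^sub>1 = \<tau> \<and> \<sigma>\<^sub>2 = \<tau>"
    if "\<sigma>\<^sub>1 \<in> cones_dim \<Sigma> CARD('d)" "\<sigma>\<^sub>2 \<in> cones_dim \<Sigma> CARD('d)" for \<sigma>\<^sub>1 \<sigma>\<^sub>2
    using fan_full_cones_Int_eq_codim1[OF fan \<tau> that] by blast
  then show ?thesis
    unfolding spline_conditions_at_def codim1_bdry_iff[OF fan pure \<tau>]
    unfolding full_cones_containing_def by auto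
qed

lemma d_top_in_Jideal_iff_spline_conditions_at:
  fixes \<Sigma> :: "(real^'d) set set"
  assumes fan: "is_fan \<Sigma>" and pure: "pure_fan \<Sigma>" and \<tau>: "\<tau> \<in> codim1 \<Sigma>" "\<tau> \<notin> sigma_neg \<Sigma> \<alpha>"
  shows "d_top \<Sigma> \<alpha> F \<tau> \<in> Jideal \<Sigma> \<alpha> \<tau> \<longleftrightarrow> spline_conditions_at \<Sigma> \<alpha> F \<tau>"
proof -
  let ?g = "gen_pow \<alpha> \<tau>" and ?S = "full_cones_containing \<Sigma> \<tau>"
  have J: "d_top \<Sigma> \<alpha> F \<tau> \<in> Jideal \<Sigma> \<alpha> \<tau> \<longleftrightarrow> ?g dvd (\<Sum>\<sigma>\<in>?S. of_int (incidence \<sigma> \<tau>) * F \<sigma>)"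
    unfolding Jideal_codim1[OF fan pure \<tau>] d_top_eq_sum_full_cones_containing[OF fan] by simp
  have sign: "incidence \<sigma> \<tau> = 1 \<or> incidence \<sigma> \<tau> = -1" if "\<sigma> \<in> ?S" for \<sigma>
    using that incidence_cases unfolding full_cones_containing_def by blast
  from full_cones_containing_codim1_cases[OF fan \<tau>(1)] show ?thesis
  proof cases
    case 1
    then show ?thesis
      unfolding J spline_conditions_at_iff_full_cones_containing[OF fan pure \<tau>(1)] by simp
  next
    case (2 \<sigma>)
    then show ?thesis
      unfolding J spline_conditions_at_iff_full_cones_containing[OF fan pure \<tau>(1)]
      using dvd_sign_mult_iff[OF sign[of \<sigma>]] by simp
  next
    case (3 \<sigma>\<^sub>1 \<sigma>\<^sub>2)
    then have "(\<Sum>\<sigma>\<in>?S. of_int (incidence \<sigma> \<tau>) * F \<sigma>) = of_int (incidence \<sigma>\<^sub>1 \<tau>) * (F \<sigma>\<^sub>1 - F \<sigma>\<^sub>2)"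
      by (simp add: right_diff_distrib)
    moreover have "?g dvd (F \<sigma>\<^sub>2 - F \<sigma>\<^sub>1) \<longleftrightarrow> ?g dvd (F \<sigma>\<^sub>1 - F \<sigma>\<^sub>2)"
      by (metis dvd_minus_iff minus_diff_eq)
    ultimately show ?thesis
      using 3 dvd_sign_mult_iff[OF sign[of \<sigma>\<^sub>1]]
      unfolding J spline_conditions_at_iff_full_cones_containing[OF fan pure \<tau>(1)] by auto
  qed
qed

theorem lemma3p7:
  fixes \<Sigma> :: "(real^'d) set set" and \<alpha> :: "(real^'d) set \<Rightarrow> int"
  assumes "is_fan \<Sigma>"
    and "pure_fan \<Sigma>"
    and "hereditary \<Sigma>"
    and "\<exists>\<sigma>\<in>\<Sigma>. dim \<sigma> = CARD('d)"
    and "smoothness_params \<Sigma> \<alpha>"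
  shows "H_top \<Sigma> \<alpha> = spline_module \<Sigma> \<alpha>"
proof -
  note fan = assms(1) and pure = assms(2)
  have chains: "F \<in> top_chains \<Sigma> \<alpha> \<longleftrightarrow> (\<forall>\<gamma>. \<gamma> \<notin> cones_dim \<Sigma> CARD('d) \<longrightarrow> F \<gamma> = 0)" for F
    using full_dim_cones_Int_sigma_neg[of \<Sigma> \<alpha>] unfolding top_chains_def by blast
  have "spline_conditions_at \<Sigma> \<alpha> F \<tau>" if "\<tau> \<in> codim1 \<Sigma>" "\<tau> \<in> sigma_neg \<Sigma> \<alpha>" for F \<tau>
    using gen_pow_sigma_neg[OF fan that] unfolding spline_conditions_at_def by simp
  then have kernel: "(\<forall>\<tau>\<in>codim1 \<Sigma> - sigma_neg \<Sigma> \<alpha>. d_top \<Sigma> \<alpha> F \<tau> \<in> Jideal \<Sigma> \<alpha> \<tau>)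
      \<longleftrightarrow> (\<forall>\<tau>\<in>codim1 \<Sigma>. spline_conditions_at \<Sigma> \<alpha> F \<tau>)" for F
    using d_top_in_Jideal_iff_spline_conditions_at[OF fan pure] by blast
  show ?thesis
    unfolding H_top_def by (auto simp: chains kernel spline_module_iff_spline_conditions_at)
qed

end
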